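(* Let $\mathbb S^1=\{z\in\mathbb C:|z|=1\}$, let $f(z)=z^2$, let $\rho(z)=e^{i\alpha}z$ with $\alpha/2\pi$ irrational, and let $g=\rho\circ f$. Then the IFS $F=\{f,g\}$ on $\mathbb S^1$ has attractor $\mathbb S^1$ (with basin $\mathbb S^1$): $F(\mathbb S^1)=\mathbb S^1$ and $F^{(n)}(K)\to\mathbb S^1$ in the Hausdorff metric for every nonempty compact $K\subseteq\mathbb S^1$. Nevertheless, for every metric $d$ on $\mathbb S^1$ inducing the standard topology, $\mathrm{Lip}(f,d)>1$ and $\mathrm{Lip}(g,d)>1$.
   Context: For a finite IFS $F$ (finite set of continuous self-maps of a metric space $\mathbb X$) and a nonempty compact $K$, $F(K)=\bigcup_{f\in F}f(K)$ and $F^{(n)}$ is its $n$-fold composition. A compact set $A$ is the attractor of $F$ if there is an open $U\supseteq A$ with $F(A)=A$ and $F^{(n)}(K)\to A$ in the Hausdorff metric for every nonempty compact $K\subseteq U$; the largest such $U$ is the basin. $\mathrm{Lip}(f,d)=\sup_{x\neq y} d(f(x),f(y))/d(x,y)$. *)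

theory Defs
  imports "HOL-Analysis.Analysis"
begin

definition ifs_image :: "('a \<Rightarrow> 'a) set \<Rightarrow> 'a set \<Rightarrow> 'a set" where
  "ifs_image F K = (\<Union>f\<in>F. f ` K)"

definition hausdorff_dist :: "'a::metric_space set \<Rightarrow> 'a set \<Rightarrow> real" where
  "hausdorff_dist A B = max (SUP a\<in>A. infdist a B) (SUP b\<in>B. infdist b A)"

definition lip_const :: "'a set \<Rightarrow> ('a \<Rightarrow> 'a \<Rightarrow> real) \<Rightarrow> ('a \<Rightarrow> 'a) \<Rightarrow> ereal" where
  "lip_const S d f = (SUP p\<in>{(x,y). x \<in> S \<and> y \<in> S \<and> x \<noteq> y}.
       ereal (d (f (fst p)) (f (snd p)) / d (fst p) (snd p)))"

end

theory Submission imports Defs begin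

text \<open>Write \<open>c = exp(i\<alpha>)\<close> and \<open>F = {z\<^sup>2, c z\<^sup>2}\<close>. By induction, \<open>F\<^sup>n(K)\<close> contains
  \<open>z^(2^n) c^m\<close> for every \<open>z \<in> K\<close> and \<open>m < 2^n\<close>, i.e. a rotate of the first \<open>2^n\<close> points of
  the orbit of the irrational rotation by \<open>c\<close>. That orbit is dense, so by compactness of the
  circle a fixed finite initial segment of it is \<open>\<epsilon>\<close>-dense, and so is every rotate of it;
  hence \<open>F\<^sup>n(K)\<close> is \<open>\<epsilon>\<close>-dense for large \<open>n\<close>.

  If \<open>\<phi>(z) = c z\<^sup>2\<close> were non-expanding for a metric \<open>d\<close> inducing the topology, put
  \<open>p = c\<^sup>-\<^sup>1\<close>, so that \<open>\<phi>(p w) = p w\<^sup>2\<close>. For the roots \<open>w\<^sub>k = exp(i\<pi>/2^k)\<close> of \<open>-1\<close> this gives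
  \<open>d(p, -p) \<le> d(p, p w\<^sub>1) \<le> d(p, p w\<^sub>2) \<le> \<dots>\<close>, contradicting \<open>p w\<^sub>k \<rightarrow> p\<close>.\<close>

lemma rotation_orbit_dense:
  fixes \<alpha> :: real
  assumes irr: "\<alpha> / (2 * pi) \<notin> \<rat>" and b: "b \<in> sphere (0::complex) 1" and e: "e > 0"
  shows "\<exists>k::nat. dist b (exp (\<i> * complex_of_real \<alpha>) ^ k) < e"
proof -
  have b_eq: "exp (\<i> * complex_of_real (Arg b)) = b"
    using b complex_norm_eq_1_exp_eq by auto
  have "isCont (\<lambda>t. exp (\<i> * complex_of_real t)) (Arg b)"
    by (intro continuous_intros)
  then obtain \<delta> where \<delta>: "\<delta> > 0"
    "\<And>t. dist t (Arg b) < \<delta> \<Longrightarrow> dist (exp (\<i> * complex_of_real t)) b < e"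
    using e b_eq unfolding continuous_at_eps_delta by metis
  have "\<delta> / (2*pi) > 0"
    using \<delta>(1) by simp
  then obtain h k where k: "k > 0"
    and hk: "\<bar>of_int k * (\<alpha> / (2*pi)) - of_int h - Arg b / (2*pi)\<bar> < \<delta> / (2*pi)"
    by (rule sequence_of_fractional_parts_is_dense[OF irr])
  define t where "t = of_int k * \<alpha> - 2*pi * of_int h"
  have "\<bar>t - Arg b\<bar> = 2*pi * \<bar>of_int k * (\<alpha> / (2*pi)) - of_int h - Arg b / (2*pi)\<bar>"
  proof -
    have "t - Arg b = 2*pi * (of_int k * (\<alpha> / (2*pi)) - of_int h - Arg b / (2*pi))"
      unfolding t_def by (simp add: field_simps)
    then show ?thesis
      by (simp add: abs_mult)
  qed
  also have "\<dots> < \<delta>"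
    using hk pi_gt_zero by (simp add: field_simps)
  finally have "dist (exp (\<i> * complex_of_real t)) b < e"
    by (intro \<delta>(2)) (simp add: dist_real_def)
  moreover have "exp (\<i> * complex_of_real t) = exp (\<i> * complex_of_real \<alpha>) ^ nat k"
  proof -
    have "exp (\<i> * complex_of_real t)
        = exp (of_nat (nat k) * (\<i> * complex_of_real \<alpha>)) / exp (\<i> * (of_int h * (of_real pi * 2)))"
      using k by (simp add: t_def exp_diff algebra_simps)
    then show ?thesis
      by (simp add: exp_of_nat_mult)
  qed
  ultimately show ?thesis
    by (metis dist_commute)
qed

lemma rotation_orbit_uniformly_dense:
  fixes \<alpha> :: real
  assumes irr: "\<alpha> / (2 * pi) \<notin> \<rat>" and e: "e > 0"
  shows "\<exists>N. \<forall>b\<in>sphere (0::complex) 1. \<exists>m<N. dist b (exp (\<i> * complex_of_real \<alpha>) ^ m) < e"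
proof -
  let ?c = "exp (\<i> * complex_of_real \<alpha>)"
  have cover: "sphere (0::complex) 1 \<subseteq> (\<Union>m. ball (?c ^ m) e)"
    using rotation_orbit_dense[OF irr _ e] by (auto simp: dist_commute)
  obtain D where D: "finite D" "sphere (0::complex) 1 \<subseteq> (\<Union>m\<in>D. ball (?c ^ m) e)"
    by (rule compactE_image[OF compact_sphere _ cover]) auto
  have "\<exists>m<Suc (Max D). dist b (?c ^ m) < e" if b: "b \<in> sphere 0 1" for b
  proof -
    obtain m where "m \<in> D" "dist (?c ^ m) b < e"
      using D(2) b by auto
    then show ?thesis
      using D(1) by (metis Max_ge dist_commute le_imp_less_Suc)
  qed
  then show ?thesis
    by blast
qed

lemma ifs_image_squaring_subset_sphere:
  fixes c :: complex
  assumes "norm c = 1" and "A \<subseteq> sphere 0 1"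
  shows "ifs_image {(\<lambda>z. z ^ 2), (\<lambda>z. c * z ^ 2)} A \<subseteq> sphere 0 1"
  using assms by (auto simp: ifs_image_def norm_mult norm_power)

lemma ifs_image_squaring_sphere:
  fixes c :: complex
  assumes "norm c = 1"
  shows "ifs_image {(\<lambda>z. z ^ 2), (\<lambda>z. c * z ^ 2)} (sphere 0 1) = sphere 0 1"
proof
  show "ifs_image {(\<lambda>z. z ^ 2), (\<lambda>z. c * z ^ 2)} (sphere 0 1) \<subseteq> sphere 0 1"
    using ifs_image_squaring_subset_sphere[OF assms] by blast
  have "z \<in> (\<lambda>z. z ^ 2) ` sphere 0 1" if "z \<in> sphere 0 1" for z :: complex
    using that by (intro image_eqI[of _ _ "csqrt z"]) (auto simp: norm_csqrt)
  then show "sphere 0 1 \<subseteq> ifs_image {(\<lambda>z. z ^ 2), (\<lambda>z. c * z ^ 2)} (sphere 0 1)"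
    by (auto simp: ifs_image_def)
qed

lemma ifs_iterate_squaring_subset_sphere:
  fixes c :: complex
  assumes "norm c = 1" and "K \<subseteq> sphere 0 1"
  shows "(ifs_image {(\<lambda>z. z ^ 2), (\<lambda>z. c * z ^ 2)} ^^ n) K \<subseteq> sphere 0 1"
  using assms by (induction n) (auto dest!: ifs_image_squaring_subset_sphere[OF assms(1)])

lemma ifs_iterate_squaring_contains_rotates:
  fixes c z :: complex
  assumes "z \<in> K" and "m < 2 ^ n"
  shows "z ^ (2 ^ n) * c ^ m \<in> (ifs_image {(\<lambda>z. z ^ 2), (\<lambda>z. c * z ^ 2)} ^^ n) K"
  using assms(2)
proof (induction n arbitrary: m)
  case 0
  then show ?case
    using assms(1) by simp
next
  case (Suc n)
  let ?F = "ifs_image {(\<lambda>z. z ^ 2), (\<lambda>z. c * z ^ 2)}"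
  let ?u = "z ^ (2 ^ n) * c ^ (m div 2)"
  have u: "?u \<in> (?F ^^ n) K"
    using Suc by (intro Suc.IH) auto
  have "c ^ m = c ^ (m mod 2) * (c ^ (m div 2)) ^ 2"
    by (metis div_mult_mod_eq power_add power_mult mult.commute)
  then have "z ^ (2 ^ Suc n) * c ^ m = c ^ (m mod 2) * ?u ^ 2"
    by (simp add: power_mult_distrib power_mult[symmetric] mult_ac)
  also have "\<dots> \<in> ?F ((?F ^^ n) K)"
    using u by (cases "m mod 2 = 0") (auto simp: ifs_image_def mod2_eq_if)
  finally show ?case
    by simp
qed

lemma hausdorff_dist_le_if_dense:
  fixes A S :: "'a::metric_space set"
  assumes "A \<noteq> {}" "A \<subseteq> S" "S \<noteq> {}" and dense: "\<And>b. b \<in> S \<Longrightarrow> infdist b A \<le> e"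
  shows "0 \<le> hausdorff_dist A S \<and> hausdorff_dist A S \<le> e"
proof -
  have "(SUP a\<in>A. infdist a S) = 0"
    using assms(1,2) by (simp add: subsetD cong: SUP_cong)
  moreover have "(SUP b\<in>S. infdist b A) \<le> e"
    using assms(3) dense by (rule cSUP_least)
  moreover have "0 \<le> e"
    using assms(3) dense infdist_nonneg by (metis ex_in_conv order_trans)
  ultimately show ?thesis
    by (simp add: hausdorff_dist_def)
qed

lemma ifs_iterate_squaring_converges_to_sphere:
  fixes \<alpha> :: real
  assumes irr: "\<alpha> / (2 * pi) \<notin> \<rat>" and K: "K \<noteq> {}" "K \<subseteq> sphere 0 1"
  defines "c \<equiv> exp (\<i> * complex_of_real \<alpha>)"
  shows "(\<lambda>n. hausdorff_dist ((ifs_image {(\<lambda>z. z ^ 2), (\<lambda>z. c * z ^ 2)} ^^ n) K) (sphere 0 1))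
           \<longlonglongrightarrow> 0"
proof (rule LIMSEQ_I)
  fix e :: real
  assume e: "e > 0"
  let ?F = "ifs_image {(\<lambda>z. z ^ 2), (\<lambda>z. c * z ^ 2)}"
  obtain N where N: "\<And>b. b \<in> sphere 0 1 \<Longrightarrow> \<exists>m<N. dist b (c ^ m) < e/2"
    using rotation_orbit_uniformly_dense[OF irr half_gt_zero[OF e]] unfolding c_def by blast
  obtain z where z: "z \<in> K"
    using K(1) by blast
  let ?H = "\<lambda>n. hausdorff_dist ((?F ^^ n) K) (sphere 0 1)"
  have "0 \<le> ?H n \<and> ?H n \<le> e/2" if n: "N \<le> n" for n
  proof (rule hausdorff_dist_le_if_dense)
    show "(?F ^^ n) K \<noteq> {}"
      using ifs_iterate_squaring_contains_rotates[OF z, of 0 n] by auto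
    show "(?F ^^ n) K \<subseteq> sphere 0 1"
      using ifs_iterate_squaring_subset_sphere K(2) by (simp add: c_def)
    show "sphere (0::complex) 1 \<noteq> {}"
      by (metis ex_in_conv norm_one mem_sphere_0)
  next
    fix b :: complex
    assume b: "b \<in> sphere 0 1"
    let ?v = "z ^ (2 ^ n)"
    have v: "norm ?v = 1"
      using z K(2) by (auto simp: norm_power)
    then obtain m where m: "m < N" "dist (b / ?v) (c ^ m) < e/2"
      using N[of "b / ?v"] b by (auto simp: norm_divide)
    have "m < 2 ^ n"
      using m(1) n less_exp[of n] by linarith
    then have "?v * c ^ m \<in> (?F ^^ n) K"
      by (rule ifs_iterate_squaring_contains_rotates[OF z])
    then have "infdist b ((?F ^^ n) K) \<le> dist b (?v * c ^ m)"
      by (rule infdist_le)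
    also have "dist b (?v * c ^ m) = dist (b / ?v) (c ^ m)"
    proof -
      have "?v \<noteq> 0"
        using v by force
      then have "b - ?v * c ^ m = ?v * (b / ?v - c ^ m)"
        by (simp add: right_diff_distrib)
      then show ?thesis
        using v by (simp add: dist_norm norm_mult)
    qed
    finally show "infdist b ((?F ^^ n) K) \<le> e/2"
      using m(2) by simp
  qed
  then show "\<exists>N. \<forall>n\<ge>N. norm (?H n - 0) < e"
    using e by force
qed

lemma nonexpansive_if_lip_const_le_one:
  assumes M: "Metric_space S d" and lip: "lip_const S d \<phi> \<le> 1" and maps: "\<phi> ` S \<subseteq> S"
    and x: "x \<in> S" and y: "y \<in> S"
  shows "d (\<phi> x) (\<phi> y) \<le> d x y"
proof (cases "x = y")
  case True
  then show ?thesis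
    using maps x by (simp add: Metric_space.mdist_zero[OF M] image_subset_iff)
next
  case False
  have "(x, y) \<in> {(x, y). x \<in> S \<and> y \<in> S \<and> x \<noteq> y}"
    using x y False by simp
  then have "ereal (d (\<phi> x) (\<phi> y) / d x y) \<le> lip_const S d \<phi>"
    unfolding lip_const_def by (rule SUP_upper2) simp
  then have "ereal (d (\<phi> x) (\<phi> y) / d x y) \<le> 1"
    using lip by (rule order_trans)
  then have "d (\<phi> x) (\<phi> y) / d x y \<le> 1"
    by simp
  moreover have "d x y > 0"
    using Metric_space.zero[OF M x y] Metric_space.nonneg[OF M] False by (metis less_eq_real_def)
  ultimately show ?thesis
    by (simp add: divide_le_eq)
qed

lemma mdist_tendsto_zero_if_mtopology_eq:
  assumes M: "Metric_space S d" and top: "Metric_space.mtopology S d = top_of_set S"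
    and lim: "(f \<longlongrightarrow> l) F" and l: "l \<in> S" and ev: "eventually (\<lambda>x. f x \<in> S) F"
  shows "((\<lambda>x. d (f x) l) \<longlongrightarrow> 0) F"
proof -
  have "limitin (Metric_space.mtopology S d) f l F"
    unfolding top using lim l ev by (simp add: limitin_subtopology)
  then show ?thesis
    by (simp add: Metric_space.limitin_metric_dist_null[OF M])
qed

lemma lip_const_squaring_gt_one:
  fixes c :: complex and d :: "complex \<Rightarrow> complex \<Rightarrow> real"
  assumes c: "norm c = 1" and M: "Metric_space (sphere 0 1) d"
    and top: "Metric_space.mtopology (sphere 0 1) d = top_of_set (sphere 0 1)"
  shows "lip_const (sphere 0 1) d (\<lambda>z. c * z ^ 2) > 1"
proof (rule ccontr)
  let ?S = "sphere (0::complex) 1"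
  let ?\<phi> = "\<lambda>z::complex. c * z ^ 2"
  assume "\<not> lip_const ?S d ?\<phi> > 1"
  then have lip: "lip_const ?S d ?\<phi> \<le> 1"
    by simp
  have maps: "?\<phi> ` ?S \<subseteq> ?S"
    using c by (auto simp: norm_mult norm_power)
  have nonexp: "d (?\<phi> x) (?\<phi> y) \<le> d x y" if "x \<in> ?S" "y \<in> ?S" for x y
    using nonexpansive_if_lip_const_le_one[OF M lip maps that] .
  define p where "p = inverse c"
  have p: "norm p = 1" "\<And>w. ?\<phi> (p * w) = p * w ^ 2"
    using c by (auto simp: p_def norm_inverse power2_eq_square field_simps norm_divide)
  define w where "w = (\<lambda>k::nat. exp (\<i> * complex_of_real (pi / 2 ^ k)))"
  have w: "norm (w k) = 1" "w (Suc k) ^ 2 = w k" for k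
    by (simp_all add: w_def flip: exp_of_nat_mult)
  have pw: "p * w k \<in> ?S" for k
    using p w by (simp add: norm_mult)
  have far: "d p (-p) \<le> d p (p * w k)" for k
  proof (induction k)
    case 0
    then show ?case
      by (simp add: w_def)
  next
    case (Suc k)
    have "d p (p * w k) = d (?\<phi> (p * 1)) (?\<phi> (p * w (Suc k)))"
      using p(2)[of 1] p(2)[of "w (Suc k)"] w(2) by simp
    also have "\<dots> \<le> d p (p * w (Suc k))"
      using nonexp[OF _ pw] p(1) by simp
    finally show ?case
      using Suc.IH by simp
  qed
  have pS: "p \<in> ?S" "-p \<in> ?S" and "p \<noteq> -p"
    using p(1) by auto
  then have gap: "d p (-p) > 0"
    using Metric_space.zero[OF M pS] Metric_space.nonneg[OF M, of p "-p"] by linarith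
  have "w \<longlonglongrightarrow> 1"
  proof -
    have "(\<lambda>k. pi * (1/2) ^ k) \<longlonglongrightarrow> 0"
      by (intro tendsto_mult_right_zero LIMSEQ_power_zero) simp
    then have "(\<lambda>k. exp (\<i> * complex_of_real (pi * (1/2) ^ k))) \<longlonglongrightarrow> exp (\<i> * complex_of_real 0)"
      by (intro tendsto_intros)
    then show ?thesis
      by (simp add: w_def power_one_over field_simps)
  qed
  then have "(\<lambda>k. p * w k) \<longlonglongrightarrow> p"
    using tendsto_mult_left[of w 1 sequentially p] by simp
  then have "(\<lambda>k. d (p * w k) p) \<longlonglongrightarrow> 0"
    using pS(1) pw by (intro mdist_tendsto_zero_if_mtopology_eq[OF M top]) auto
  from order_tendstoD(2)[OF this gap] obtain k where "d (p * w k) p < d p (-p)"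
    by (auto simp: eventually_sequentially)
  with far[of k] show False
    using Metric_space.commute[OF M] by simp
qed

theorem mainTheorem2:
  fixes \<alpha> :: real and f g :: "complex \<Rightarrow> complex"
  assumes irr: "\<alpha> / (2 * pi) \<notin> \<rat>"
    and f_def: "f = (\<lambda>z. z ^ 2)"
    and g_def: "g = (\<lambda>z. exp (\<i> * complex_of_real \<alpha>) * f z)"
  shows "ifs_image {f, g} (sphere 0 1) = sphere 0 1
    \<and> (\<forall>K. K \<noteq> {} \<and> compact K \<and> K \<subseteq> sphere 0 1 \<longrightarrow>
          (\<lambda>n. hausdorff_dist ((ifs_image {f, g} ^^ n) K) (sphere 0 1)) \<longlonglongrightarrow> 0)
    \<and> (\<forall>d. Metric_space (sphere 0 1) d
          \<and> Metric_space.mtopology (sphere 0 1) d = top_of_set (sphere (0::complex) 1)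
          \<longrightarrow> lip_const (sphere 0 1) d f > 1 \<and> lip_const (sphere 0 1) d g > 1)"
proof -
  define c where "c = exp (\<i> * complex_of_real \<alpha>)"
  have c: "norm c = 1"
    by (simp add: c_def)
  have fg: "f = (\<lambda>z. 1 * z ^ 2)" "g = (\<lambda>z. c * z ^ 2)"
    by (simp_all add: f_def g_def c_def)
  show ?thesis
    using ifs_image_squaring_sphere[OF c]
      ifs_iterate_squaring_converges_to_sphere[OF irr]
      lip_const_squaring_gt_one[of 1] lip_const_squaring_gt_one[OF c]
    unfolding fg c_def by auto
qed

end
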